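(* Let $1\le r\le s\le t$ and let $u=ABCd$, $v=A'B'C'd'$ be vertices of $E3C(r,s,t)$ with $A\ne A'$, $B\ne B'$, $C\ne C'$ and $d\ne d'$. Then there exist $2r+2$ pairwise internally disjoint $u$–$v$ paths in $E3C(r,s,t)$, each of length at most $r+s+t+6$.
   Context: The exchanged 3-ary $n$-cube $E3C(r,s,t)$ ($r,s,t\ge1$, $n=r+s+t+1$): vertices are strings written $x=ABCd$ with $A\in\{0,1,2\}^r$, $B\in\{0,1,2\}^s$, $C\in\{0,1,2\}^t$, $d\in\{0,1,2\}$. Two distinct vertices $x=ABCd$, $y=A'B'C'd'$ are adjacent iff one of: (E0) $A=A',B=B',C=C'$ and $d\ne d'$; (E1) $d=d'=0$, $A=A'$, $B=B'$ and $C,C'$ differ in exactly one position; (E2) $d=d'=1$, $A=A'$, $C=C'$ and $B,B'$ differ in exactly one position; (E3) $d=d'=2$, $B=B'$, $C=C'$ and $A,A'$ differ in exactly one position. Paths are internally disjoint if they share no vertices other than their endpoints; length = number of edges. *)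

theory Defs
  imports Main
begin

type_synonym e3vert = "nat list \<times> nat list \<times> nat list \<times> nat"

definition tstr :: "nat \<Rightarrow> nat list \<Rightarrow> bool" where
  "tstr n X \<longleftrightarrow> length X = n \<and> (\<forall>x\<in>set X. x < 3)"

definition e3c_verts :: "nat \<Rightarrow> nat \<Rightarrow> nat \<Rightarrow> e3vert set" where
  "e3c_verts r s t = {(A,B,C,d). tstr r A \<and> tstr s B \<and> tstr t C \<and> d < 3}"

definition differ_one :: "nat list \<Rightarrow> nat list \<Rightarrow> bool" where
  "differ_one X Y \<longleftrightarrow> length X = length Y \<and> card {i. i < length X \<and> X ! i \<noteq> Y ! i} = 1"

definition e3c_adj :: "nat \<Rightarrow> nat \<Rightarrow> nat \<Rightarrow> e3vert \<Rightarrow> e3vert \<Rightarrow> bool" where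
  "e3c_adj r s t x y \<longleftrightarrow> x \<in> e3c_verts r s t \<and> y \<in> e3c_verts r s t \<and> x \<noteq> y \<and>
     (case x of (A,B,C,d) \<Rightarrow> case y of (A',B',C',d') \<Rightarrow>
        (A = A' \<and> B = B' \<and> C = C' \<and> d \<noteq> d')
      \<or> (d = 0 \<and> d' = 0 \<and> A = A' \<and> B = B' \<and> differ_one C C')
      \<or> (d = 1 \<and> d' = 1 \<and> A = A' \<and> C = C' \<and> differ_one B B')
      \<or> (d = 2 \<and> d' = 2 \<and> B = B' \<and> C = C' \<and> differ_one A A'))"

definition e3c_path :: "nat \<Rightarrow> nat \<Rightarrow> nat \<Rightarrow> e3vert \<Rightarrow> e3vert \<Rightarrow> e3vert list \<Rightarrow> bool" where
  "e3c_path r s t u v p \<longleftrightarrow> p \<noteq> [] \<and> hd p = u \<and> last p = v \<and> distinct p \<and>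
     set p \<subseteq> e3c_verts r s t \<and> (\<forall>i. Suc i < length p \<longrightarrow> e3c_adj r s t (p ! i) (p ! Suc i))"

definition path_len :: "'a list \<Rightarrow> nat" where
  "path_len p = length p - 1"

end

theory Submission
  imports Defs
begin

text \<open>
  Permuting the three layers, and with them the three strings (the strings changed inside layers
  0, 1, 2 are C, B, A), maps E3C(r,s,t) isomorphically onto the cube with correspondingly permuted
  string lengths. So we may assume that u = (A,B,C,0) lies in layer 0 and v = (A',B',C',1) in
  layer 1, while r is still at most the lengths of B and C.

  Inside one layer, a string is turned into another by a Hamming walk that corrects the differing
  positions from left to right. For each of the 2r neighbours X of C (change one of the first r
  positions to one of the two other digits) and the neighbour Y of B' with the same index, the
  route
    u, (A,B,X,0), then layer 1: B ~> Y, then layer 2: A ~> A', then layer 0: X ~> C', (A',Y,C',1), v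
  has at most r+s+t+7 vertices, and each of its inner vertices determines X or Y, so two such
  routes meet only at u and v. Two further routes, one through the old strings C and B' and one
  detouring through a neighbour of A different from A', avoid all others and give 2r+2 paths.
\<close>

lemma differ_one_Cons_Cons_same: "differ_one (a # V) (a # W) \<longleftrightarrow> differ_one V W"
proof -
  have "{i. i < length (a # V) \<and> (a # V) ! i \<noteq> (a # W) ! i} = Suc ` {i. i < length V \<and> V ! i \<noteq> W ! i}"
  proof (rule set_eqI)
    fix i
    show "i \<in> {i. i < length (a # V) \<and> (a # V) ! i \<noteq> (a # W) ! i} \<longleftrightarrow>
        i \<in> Suc ` {i. i < length V \<and> V ! i \<noteq> W ! i}"
      by (cases i) auto
  qed
  then show ?thesis
    unfolding differ_one_def by (simp add: card_image)
qed

lemma differ_one_list_update: "k < length V \<Longrightarrow> c \<noteq> V ! k \<Longrightarrow> differ_one V (V[k := c])"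
proof -
  assume "k < length V" "c \<noteq> V ! k"
  then have "{i. i < length V \<and> V ! i \<noteq> V[k := c] ! i} = {k}"
    by (auto simp: nth_list_update)
  then show ?thesis
    unfolding differ_one_def by simp
qed

lemma differ_one_commute: "differ_one V W \<longleftrightarrow> differ_one W V"
  unfolding differ_one_def by (auto simp: eq_commute)

lemma differ_one_imp_neq: "differ_one V W \<Longrightarrow> V \<noteq> W"
  unfolding differ_one_def by auto

fun hamming_walk :: "nat list \<Rightarrow> nat list \<Rightarrow> nat list list" where
  "hamming_walk (a # V) (b # W) =
     (if a = b then map (Cons a) (hamming_walk V W)
      else (a # V) # map (Cons b) (hamming_walk V W))"
| "hamming_walk V W = [V]"

lemma hamming_walk_not_Nil [simp]: "hamming_walk V W \<noteq> []"
  by (induction V W rule: hamming_walk.induct) auto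

lemma hd_hamming_walk [simp]: "hd (hamming_walk V W) = V"
  by (induction V W rule: hamming_walk.induct) (auto simp: hd_map)

lemma last_hamming_walk [simp]: "length V = length W \<Longrightarrow> last (hamming_walk V W) = W"
  by (induction V W rule: hamming_walk.induct) (auto simp: last_map)

lemma distinct_hamming_walk [simp]: "distinct (hamming_walk V W)"
  by (induction V W rule: hamming_walk.induct) (auto simp: distinct_map)

lemma length_hamming_walk_le: "length (hamming_walk V W) \<le> length V + 1"
  by (induction V W rule: hamming_walk.induct) auto

lemma set_hamming_walk:
  "X \<in> set (hamming_walk V W) \<Longrightarrow> length X = length V \<and> set X \<subseteq> set V \<union> set W"
proof (induction V W arbitrary: X rule: hamming_walk.induct)
  case (1 a V b W)
  then show ?case
    by (cases "a = b") fastforce+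
qed auto

lemma tstr_hamming_walk: "tstr n V \<Longrightarrow> tstr n W \<Longrightarrow> X \<in> set (hamming_walk V W) \<Longrightarrow> tstr n X"
  using set_hamming_walk unfolding tstr_def by blast

lemma successively_differ_one_hamming_walk:
  "length V = length W \<Longrightarrow> successively differ_one (hamming_walk V W)"
proof (induction V W rule: hamming_walk.induct)
  case (1 a V b W)
  then have "successively differ_one (hamming_walk V W)"
    by (cases "a = b") auto
  then have "successively differ_one (map (Cons c) (hamming_walk V W))" for c
    by (simp add: successively_map differ_one_Cons_Cons_same)
  moreover have "a \<noteq> b \<Longrightarrow> differ_one (a # V) (b # V)"
    using differ_one_list_update[of 0 "a # V" b] by simp
  ultimately show ?case
    by (auto simp: successively_Cons hd_map)
qed auto

lemma tstr_list_update: "tstr n V \<Longrightarrow> c < 3 \<Longrightarrow> tstr n (V[k := c])"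
  unfolding tstr_def by (metis length_list_update insert_iff set_update_subset_insert subsetD)

lemma digit_shift_neq:
  assumes "(a::nat) < 3" "b < 2"
  shows "(a + b + 1) mod 3 \<noteq> a"
proof -
  have "a = 0 \<or> a = 1 \<or> a = 2" "b = 0 \<or> b = 1"
    using assms by arith+
  then show ?thesis
    by (elim disjE) simp_all
qed

lemma digit_shift_inj:
  assumes "(a::nat) < 3" "b < 2" "c < 2" "(a + b + 1) mod 3 = (a + c + 1) mod 3"
  shows "b = c"
proof -
  have "a = 0 \<or> a = 1 \<or> a = 2" "b = 0 \<or> b = 1" "c = 0 \<or> c = 1"
    using assms(1-3) by arith+
  then show ?thesis
    using assms(4) by (elim disjE) simp_all
qed

definition ternary_nbr :: "nat list \<Rightarrow> nat \<Rightarrow> nat list" where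
  "ternary_nbr W i = W[i div 2 := (W ! (i div 2) + i mod 2 + 1) mod 3]"

lemma tstr_ternary_nbr:
  assumes "tstr n W" "i < 2 * n"
  shows "tstr n (ternary_nbr W i)" "differ_one W (ternary_nbr W i)"
proof -
  have k: "i div 2 < length W"
    using assms by (auto simp: tstr_def)
  then have "W ! (i div 2) < 3"
    using assms(1) by (auto simp: tstr_def)
  then show "differ_one W (ternary_nbr W i)"
    unfolding ternary_nbr_def using k digit_shift_neq by (simp add: differ_one_list_update)
  show "tstr n (ternary_nbr W i)"
    unfolding ternary_nbr_def using assms(1) by (simp add: tstr_list_update)
qed

lemma inj_on_ternary_nbr:
  assumes "tstr n W"
  shows "inj_on (ternary_nbr W) {..<2 * n}"
proof (rule inj_onI)
  fix i j
  assume ij: "i \<in> {..<2 * n}" "j \<in> {..<2 * n}" and eq: "ternary_nbr W i = ternary_nbr W j"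
  have k: "i div 2 < length W" and digit: "W ! (i div 2) < 3"
    using assms ij by (auto simp: tstr_def)
  have "ternary_nbr W i ! (i div 2) = (W ! (i div 2) + i mod 2 + 1) mod 3"
    using k by (simp add: ternary_nbr_def)
  then have "ternary_nbr W j ! (i div 2) = (W ! (i div 2) + i mod 2 + 1) mod 3"
    by (simp only: eq)
  moreover have "ternary_nbr W j ! (i div 2) =
      (if i div 2 = j div 2 then (W ! (i div 2) + j mod 2 + 1) mod 3 else W ! (i div 2))"
    using k by (simp add: ternary_nbr_def nth_list_update)
  ultimately have "i div 2 = j div 2" "i mod 2 = j mod 2"
    using digit_shift_neq[OF digit, of "i mod 2"] digit_shift_inj[OF digit, of "i mod 2" "j mod 2"]
    by (auto split: if_splits)
  then show "i = j"
    by (metis div_mult_mod_eq)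
qed

lemma ex_differ_one_avoiding:
  assumes "tstr n V" "tstr n W" "V \<noteq> W"
  obtains X where "tstr n X" "differ_one V X" "X \<noteq> W"
proof -
  obtain k where k: "k < length V" "V ! k \<noteq> W ! k"
    using assms nth_equalityI unfolding tstr_def by metis
  have "V ! k < 3" "W ! k < 3"
    using assms k unfolding tstr_def by auto
  then have third: "3 - V ! k - W ! k < 3" "3 - V ! k - W ! k \<noteq> V ! k" "3 - V ! k - W ! k \<noteq> W ! k"
    using k(2) by arith+
  show ?thesis
  proof
    show "tstr n (V[k := 3 - V ! k - W ! k])"
      using assms(1) third(1) by (rule tstr_list_update)
    show "differ_one V (V[k := 3 - V ! k - W ! k])"
      using k(1) third(2) by (rule differ_one_list_update)
    show "V[k := 3 - V ! k - W ! k] \<noteq> W"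
      using k(1) third(3) by (metis nth_list_update_eq)
  qed
qed

lemma successively_e3c_adj_walk0:
  assumes "(A, B, C, 0) \<in> e3c_verts r s t" "tstr t C'"
  shows "successively (e3c_adj r s t) (map (\<lambda>X. (A, B, X, 0)) (hamming_walk C C'))"
  using assms successively_differ_one_hamming_walk[of C C'] tstr_hamming_walk[of t C C']
  by (fastforce simp: successively_map e3c_adj_def e3c_verts_def tstr_def
      elim!: successively_mono dest: differ_one_imp_neq)

lemma successively_e3c_adj_walk1:
  assumes "(A, B, C, 1) \<in> e3c_verts r s t" "tstr s B'"
  shows "successively (e3c_adj r s t) (map (\<lambda>X. (A, X, C, 1)) (hamming_walk B B'))"
  using assms successively_differ_one_hamming_walk[of B B'] tstr_hamming_walk[of s B B']
  by (fastforce simp: successively_map e3c_adj_def e3c_verts_def tstr_def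
      elim!: successively_mono dest: differ_one_imp_neq)

lemma successively_e3c_adj_walk2:
  assumes "(A, B, C, 2) \<in> e3c_verts r s t" "tstr r A'"
  shows "successively (e3c_adj r s t) (map (\<lambda>X. (X, B, C, 2)) (hamming_walk A A'))"
  using assms successively_differ_one_hamming_walk[of A A'] tstr_hamming_walk[of r A A']
  by (fastforce simp: successively_map e3c_adj_def e3c_verts_def tstr_def
      elim!: successively_mono dest: differ_one_imp_neq)

lemma e3c_adj_imp_verts: "e3c_adj r s t x y \<Longrightarrow> x \<in> e3c_verts r s t \<and> y \<in> e3c_verts r s t"
  by (simp add: e3c_adj_def)

lemma set_subset_e3c_verts_if_successively:
  "successively (e3c_adj r s t) p \<Longrightarrow> length p \<noteq> 1 \<Longrightarrow> set p \<subseteq> e3c_verts r s t"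
proof (induction p rule: induct_list012)
  case (3 x y zs)
  then show ?case
    by (cases zs) (auto dest: e3c_adj_imp_verts)
qed auto

lemma e3c_pathI:
  assumes "p \<noteq> []" "hd p = u" "last p = v" "u \<noteq> v" "distinct p" "successively (e3c_adj r s t) p"
  shows "e3c_path r s t u v p"
proof -
  have "length p \<noteq> 1"
    using assms(1-4) by (cases p) auto
  then show ?thesis
    using assms set_subset_e3c_verts_if_successively
    unfolding e3c_path_def successively_conv_nth by blast
qed

lemma e3c_path_has_inner_vertex:
  assumes "e3c_path r s t u v p" "u \<noteq> v" "\<not> e3c_adj r s t u v"
  shows "\<not> set p \<subseteq> {u, v}"
proof
  assume sub: "set p \<subseteq> {u, v}"
  have p: "p \<noteq> []" "hd p = u" "last p = v" "distinct p"
    and adj: "\<forall>i. Suc i < length p \<longrightarrow> e3c_adj r s t (p ! i) (p ! Suc i)"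
    using assms(1) unfolding e3c_path_def by auto
  have "length p \<le> 2"
    using distinct_card[OF p(4)] card_mono[OF _ sub] assms(2) by simp
  moreover have "length p \<noteq> 1"
    using p assms(2) by (cases p) auto
  ultimately have "length p = 2"
    using p(1) by (simp add: le_Suc_eq numeral_2_eq_2)
  then have "p ! 0 = u" "p ! 1 = v"
    using p by (simp_all add: hd_conv_nth last_conv_nth)
  then show False
    using adj \<open>length p = 2\<close> assms(3) by (metis One_nat_def lessI numeral_2_eq_2)
qed

definition disjoint_paths ::
  "nat \<Rightarrow> nat \<Rightarrow> nat \<Rightarrow> e3vert \<Rightarrow> e3vert \<Rightarrow> nat \<Rightarrow> nat \<Rightarrow> e3vert list list \<Rightarrow> bool" where
  "disjoint_paths r s t u v n L P \<longleftrightarrow> length P = n \<and> distinct P \<and>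
     (\<forall>p\<in>set P. e3c_path r s t u v p \<and> path_len p \<le> L) \<and>
     (\<forall>i<length P. \<forall>j<length P. i \<noteq> j \<longrightarrow> set (P ! i) \<inter> set (P ! j) \<subseteq> {u, v})"

lemma disjoint_paths_upt:
  assumes "u \<noteq> v" "\<not> e3c_adj r s t u v"
    and path: "\<And>i. i < n \<Longrightarrow> e3c_path r s t u v (f i)"
    and len: "\<And>i. i < n \<Longrightarrow> path_len (f i) \<le> L"
    and disj: "\<And>i j. i < n \<Longrightarrow> j < n \<Longrightarrow> i \<noteq> j \<Longrightarrow> set (f i) \<inter> set (f j) \<subseteq> {u, v}"
  shows "disjoint_paths r s t u v n L (map f [0..<n])"
proof -
  have "inj_on f {0..<n}"
  proof (rule inj_onI, rule ccontr)
    fix i j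
    assume ij: "i \<in> {0..<n}" "j \<in> {0..<n}" "f i = f j" "i \<noteq> j"
    then show False
      using disj[of i j] e3c_path_has_inner_vertex[OF path assms(1,2), of i] by auto
  qed
  then show ?thesis
    using path len disj unfolding disjoint_paths_def by (auto simp: distinct_map)
qed

lemma e3c_path_map:
  assumes inj: "inj_on f (e3c_verts r s t)" and verts: "f ` e3c_verts r s t \<subseteq> e3c_verts r' s' t'"
    and adj: "\<And>w w'. e3c_adj r s t w w' \<Longrightarrow> e3c_adj r' s' t' (f w) (f w')"
    and "e3c_path r s t u v p"
  shows "e3c_path r' s' t' (f u) (f v) (map f p)"
proof -
  have p: "p \<noteq> []" "hd p = u" "last p = v" "distinct p" "set p \<subseteq> e3c_verts r s t"
    "\<forall>i. Suc i < length p \<longrightarrow> e3c_adj r s t (p ! i) (p ! Suc i)"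
    using assms(4) unfolding e3c_path_def by auto
  have "distinct (map f p)"
    using p(4,5) inj_on_subset[OF inj] by (simp add: distinct_map)
  moreover have "set (map f p) \<subseteq> e3c_verts r' s' t'"
    using p(5) verts by auto
  ultimately show ?thesis
    using p adj unfolding e3c_path_def by (simp add: hd_map last_map)
qed

lemma disjoint_paths_map:
  assumes inj: "inj_on f (e3c_verts r s t)" and verts: "f ` e3c_verts r s t \<subseteq> e3c_verts r' s' t'"
    and adj: "\<And>w w'. e3c_adj r s t w w' \<Longrightarrow> e3c_adj r' s' t' (f w) (f w')"
    and P: "disjoint_paths r s t u v n L P"
  shows "disjoint_paths r' s' t' (f u) (f v) n L (map (map f) P)"
proof -
  have paths: "e3c_path r s t u v p" "path_len p \<le> L" and sub: "set p \<subseteq> e3c_verts r s t"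
    if "p \<in> set P" for p
    using P that unfolding disjoint_paths_def e3c_path_def by auto
  have "inj_on (map f) (set P)"
  proof (rule inj_onI)
    fix p q
    assume "p \<in> set P" "q \<in> set P" "map f p = map f q"
    moreover have "inj_on f (set p \<union> set q)"
      using sub[OF \<open>p \<in> set P\<close>] sub[OF \<open>q \<in> set P\<close>] by (blast intro: inj_on_subset[OF inj])
    ultimately show "p = q"
      by (simp add: inj_on_map_eq_map)
  qed
  moreover have "set (map f p) \<inter> set (map f q) \<subseteq> {f u, f v}"
    if "p \<in> set P" "q \<in> set P" "set p \<inter> set q \<subseteq> {u, v}" for p q
    using that sub inj_on_image_Int[OF inj, of "set p" "set q"] by auto
  ultimately show ?thesis
    using P paths e3c_path_map[OF inj verts adj] unfolding disjoint_paths_def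
    by (auto simp: distinct_map path_len_def)
qed

definition layer_string :: "nat \<Rightarrow> nat list \<Rightarrow> nat list \<Rightarrow> nat list \<Rightarrow> nat list" where
  "layer_string l A B C = (if l = 0 then C else if l = 1 then B else A)"

definition layer_len :: "nat \<Rightarrow> nat \<Rightarrow> nat \<Rightarrow> nat \<Rightarrow> nat" where
  "layer_len r s t l = (if l = 0 then t else if l = 1 then s else r)"

definition layer_perm :: "nat \<Rightarrow> nat \<Rightarrow> nat \<Rightarrow> nat" where
  "layer_perm d d' m = (if m = 0 then d else if m = 1 then d' else 3 - d - d')"

text \<open>\<open>relabel d d'\<close> sends the layers 0, 1, 2 to d, d', 3 - d - d', each string travelling
  with the layer whose edges change it.\<close>
definition relabel :: "nat \<Rightarrow> nat \<Rightarrow> e3vert \<Rightarrow> e3vert" where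
  "relabel d d' = (\<lambda>(X2, X1, X0, m).
     let S = (\<lambda>l. if l = d then X0 else if l = d' then X1 else X2) in (S 2, S 1, S 0, layer_perm d d' m))"

lemma layer_pair_cases:
  "(d::nat) < 3 \<Longrightarrow> d' < 3 \<Longrightarrow> d \<noteq> d' \<Longrightarrow>
    d = 0 \<and> d' = 1 \<or> d = 0 \<and> d' = 2 \<or> d = 1 \<and> d' = 0 \<or> d = 1 \<and> d' = 2 \<or> d = 2 \<and> d' = 0 \<or> d = 2 \<and> d' = 1"
  by arith

lemma layer_cases: "(m::nat) < 3 \<Longrightarrow> m = 0 \<or> m = 1 \<or> m = 2"
  by arith

lemma tstr_layer_string:
  "tstr r A \<Longrightarrow> tstr s B \<Longrightarrow> tstr t C \<Longrightarrow> tstr (layer_len r s t l) (layer_string l A B C)"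
  by (simp add: layer_len_def layer_string_def)

context
  fixes d d' :: nat
  assumes layers: "d < 3" "d' < 3" "d \<noteq> d'"
begin

lemma layer_len_sum:
  "layer_len r s t (3 - d - d') + layer_len r s t d' + layer_len r s t d = r + s + t"
  using layer_pair_cases[OF layers] by (elim disjE) (simp_all add: layer_len_def)

lemma relabel_layer_strings:
  "relabel d d' (layer_string (3 - d - d') A B C, layer_string d' A B C, layer_string d A B C, m)
    = (A, B, C, layer_perm d d' m)"
  using layer_pair_cases[OF layers] by (elim disjE) (simp_all add: relabel_def layer_string_def)

lemma relabel_verts:
  assumes "w \<in> e3c_verts (layer_len r s t (3 - d - d')) (layer_len r s t d') (layer_len r s t d)"
  shows "relabel d d' w \<in> e3c_verts r s t"
proof -
  obtain X2 X1 X0 m where w: "w = (X2, X1, X0, m)"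
    by (cases w)
  have "m = 0 \<or> m = 1 \<or> m = 2"
    using assms w layer_cases by (simp add: e3c_verts_def)
  then show ?thesis
    using layer_pair_cases[OF layers] assms unfolding w
    by (elim disjE) (simp_all add: relabel_def layer_perm_def layer_len_def e3c_verts_def)
qed

lemma inj_on_relabel: "inj_on (relabel d d') (e3c_verts r s t)"
proof (rule inj_onI)
  fix w w'
  assume "w \<in> e3c_verts r s t" "w' \<in> e3c_verts r s t" and eq: "relabel d d' w = relabel d d' w'"
  obtain X2 X1 X0 m X2' X1' X0' m' where w: "w = (X2, X1, X0, m)" "w' = (X2', X1', X0', m')"
    by (cases w, cases w')
  have "m = 0 \<or> m = 1 \<or> m = 2" "m' = 0 \<or> m' = 1 \<or> m' = 2"
    using \<open>w \<in> _\<close> \<open>w' \<in> _\<close> w layer_cases by (simp_all add: e3c_verts_def)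
  then show "w = w'"
    using layer_pair_cases[OF layers] eq unfolding w
    by (elim disjE) (simp_all add: relabel_def layer_perm_def)
qed

lemma e3c_adj_relabel:
  assumes "e3c_adj (layer_len r s t (3 - d - d')) (layer_len r s t d') (layer_len r s t d) w w'"
  shows "e3c_adj r s t (relabel d d' w) (relabel d d' w')"
proof -
  obtain X2 X1 X0 m X2' X1' X0' m' where w: "w = (X2, X1, X0, m)" "w' = (X2', X1', X0', m')"
    by (cases w, cases w')
  have verts: "w \<in> e3c_verts (layer_len r s t (3 - d - d')) (layer_len r s t d') (layer_len r s t d)"
    "w' \<in> e3c_verts (layer_len r s t (3 - d - d')) (layer_len r s t d') (layer_len r s t d)"
    using assms by (auto simp: e3c_adj_def)
  then have "m = 0 \<or> m = 1 \<or> m = 2" "m' = 0 \<or> m' = 1 \<or> m' = 2"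
    using w layer_cases by (simp_all add: e3c_verts_def)
  moreover have "relabel d d' w \<noteq> relabel d d' w'"
    using assms verts inj_on_relabel by (auto simp: e3c_adj_def dest: inj_onD)
  ultimately show ?thesis
    using layer_pair_cases[OF layers] assms relabel_verts[OF verts(1)] relabel_verts[OF verts(2)]
    unfolding w by (elim disjE) (simp_all add: relabel_def layer_perm_def e3c_adj_def)
qed

end

locale layer01_pair =
  fixes r s t k :: nat and A B C A' B' C' :: "nat list"
  assumes A: "tstr r A" and A': "tstr r A'" and B: "tstr s B" and B': "tstr s B'"
    and C: "tstr t C" and C': "tstr t C'"
    and A_neq: "A \<noteq> A'" and B_neq: "B \<noteq> B'" and C_neq: "C \<noteq> C'"
    and k_le_s: "k \<le> s" and k_le_t: "k \<le> t"
begin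

abbreviation u :: e3vert where "u \<equiv> (A, B, C, 0)"
abbreviation v :: e3vert where "v \<equiv> (A', B', C', 1)"

definition main_route :: "nat list \<Rightarrow> nat list \<Rightarrow> e3vert list" where
  "main_route X Y = [u, (A, B, X, 0)] @ map (\<lambda>Y'. (A, Y', X, 1)) (hamming_walk B Y)
     @ map (\<lambda>Z. (Z, Y, X, 2)) (hamming_walk A A') @ map (\<lambda>X'. (A', Y, X', 0)) (hamming_walk X C')
     @ [(A', Y, C', 1), v]"

lemma string_lengths:
  "length A = r" "length A' = r" "length B = s" "length B' = s" "length C = t" "length C' = t"
  using A A' B B' C C' by (auto simp: tstr_def)

lemma main_route_path:
  assumes X: "tstr t X" "differ_one C X" and Y: "tstr s Y" "differ_one Y B'"
  shows "e3c_path r s t u v (main_route X Y)" "path_len (main_route X Y) \<le> r + s + t + 6"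
proof -
  have lens: "length X = t" "length Y = s"
    using X Y by (auto simp: tstr_def)
  show "path_len (main_route X Y) \<le> r + s + t + 6"
    using length_hamming_walk_le[of B Y] length_hamming_walk_le[of A A'] length_hamming_walk_le[of X C']
    by (simp add: main_route_def path_len_def string_lengths lens)
  have "successively (e3c_adj r s t) (main_route X Y)"
    unfolding main_route_def using A A' B B' C C' X Y lens string_lengths
      successively_e3c_adj_walk1[of A B X r s t Y] successively_e3c_adj_walk2[of A Y X r s t A']
      successively_e3c_adj_walk0[of A' Y X r s t C']
    by (simp add: successively_append_iff successively_Cons hd_append hd_map last_map
        e3c_adj_def e3c_verts_def differ_one_imp_neq)
  moreover have "distinct (main_route X Y)"
    unfolding main_route_def using A_neq B_neq C_neq X Y
    by (auto simp: distinct_map inj_on_def dest: differ_one_imp_neq)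
  ultimately show "e3c_path r s t u v (main_route X Y)"
    by (intro e3c_pathI) (auto simp: main_route_def)
qed

definition side_route :: "e3vert list" where
  "side_route = u # map (\<lambda>Y. (A, Y, C, 1)) (hamming_walk B B')
     @ map (\<lambda>Z. (Z, B', C, 2)) (hamming_walk A A') @ map (\<lambda>X. (A', B', X, 0)) (hamming_walk C C') @ [v]"

lemma side_route_path:
  shows "e3c_path r s t u v side_route" "path_len side_route \<le> r + s + t + 6"
proof -
  show "path_len side_route \<le> r + s + t + 6"
    using length_hamming_walk_le[of B B'] length_hamming_walk_le[of A A'] length_hamming_walk_le[of C C']
    by (simp add: side_route_def path_len_def string_lengths)
  have "successively (e3c_adj r s t) side_route"
    unfolding side_route_def using A A' B B' C C' string_lengths
      successively_e3c_adj_walk1[of A B C r s t B'] successively_e3c_adj_walk2[of A B' C r s t A']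
      successively_e3c_adj_walk0[of A' B' C r s t C']
    by (simp add: successively_append_iff successively_Cons hd_append hd_map last_map
        e3c_adj_def e3c_verts_def)
  moreover have "distinct side_route"
    unfolding side_route_def using A_neq B_neq C_neq by (auto simp: distinct_map inj_on_def)
  ultimately show "e3c_path r s t u v side_route"
    by (intro e3c_pathI) (auto simp: side_route_def)
qed

definition A_mid :: "nat list" where
  "A_mid = (SOME M. tstr r M \<and> differ_one A M \<and> M \<noteq> A')"

lemma A_mid: "tstr r A_mid" "differ_one A A_mid" "A_mid \<noteq> A'"
proof -
  obtain M where "tstr r M" "differ_one A M" "M \<noteq> A'"
    using ex_differ_one_avoiding[OF A A' A_neq] .
  then have "\<exists>M. tstr r M \<and> differ_one A M \<and> M \<noteq> A'"
    by blast
  then have "tstr r A_mid \<and> differ_one A A_mid \<and> A_mid \<noteq> A'"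
    unfolding A_mid_def by (rule someI_ex)
  then show "tstr r A_mid" "differ_one A A_mid" "A_mid \<noteq> A'"
    by auto
qed

definition detour_route :: "e3vert list" where
  "detour_route = [u, (A, B, C, 2), (A_mid, B, C, 2)] @ map (\<lambda>Y. (A_mid, Y, C, 1)) (hamming_walk B B')
     @ map (\<lambda>X. (A_mid, B', X, 0)) (hamming_walk C C')
     @ map (\<lambda>Z. (Z, B', C', 2)) (hamming_walk A_mid A') @ [v]"

lemma detour_route_path:
  shows "e3c_path r s t u v detour_route" "path_len detour_route \<le> r + s + t + 6"
proof -
  have len: "length A_mid = r"
    using A_mid(1) by (simp add: tstr_def)
  show "path_len detour_route \<le> r + s + t + 6"
    using length_hamming_walk_le[of B B'] length_hamming_walk_le[of A_mid A'] length_hamming_walk_le[of C C']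
    by (simp add: detour_route_def path_len_def string_lengths len)
  have "successively (e3c_adj r s t) detour_route"
    unfolding detour_route_def using A A' B B' C C' A_mid string_lengths len
      successively_e3c_adj_walk1[of A_mid B C r s t B'] successively_e3c_adj_walk0[of A_mid B' C r s t C']
      successively_e3c_adj_walk2[of A_mid B' C' r s t A']
    by (simp add: successively_append_iff successively_Cons hd_append hd_map last_map
        e3c_adj_def e3c_verts_def differ_one_imp_neq)
  moreover have "distinct detour_route"
    unfolding detour_route_def using A_neq B_neq C_neq A_mid
    by (auto simp: distinct_map inj_on_def dest: differ_one_imp_neq)
  ultimately show "e3c_path r s t u v detour_route"
    by (intro e3c_pathI) (auto simp: detour_route_def)
qed

definition main_region :: "nat list \<Rightarrow> nat list \<Rightarrow> e3vert set" where
  "main_region X Y = {(A, B, X, 0), (A', Y, C', 1)} \<union> range (\<lambda>Y'. (A, Y', X, 1))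
     \<union> range (\<lambda>Z. (Z, Y, X, 2)) \<union> range (\<lambda>X'. (A', Y, X', 0))"

definition side_region :: "e3vert set" where
  "side_region = range (\<lambda>Y. (A, Y, C, 1)) \<union> range (\<lambda>Z. (Z, B', C, 2)) \<union> range (\<lambda>X. (A', B', X, 0))"

definition detour_region :: "e3vert set" where
  "detour_region = range (\<lambda>Z. (Z, B, C, 2)) \<union> range (\<lambda>Y. (A_mid, Y, C, 1))
     \<union> range (\<lambda>X. (A_mid, B', X, 0)) \<union> range (\<lambda>Z. (Z, B', C', 2))"

lemma set_main_route: "set (main_route X Y) \<subseteq> {u, v} \<union> main_region X Y"
  unfolding main_route_def main_region_def by auto

lemma set_side_route: "set side_route \<subseteq> {u, v} \<union> side_region"
  unfolding side_route_def side_region_def by auto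

lemma set_detour_route: "set detour_route \<subseteq> {u, v} \<union> detour_region"
  unfolding detour_route_def detour_region_def by auto

lemma main_region_disjoint: "X \<noteq> X' \<Longrightarrow> Y \<noteq> Y' \<Longrightarrow> main_region X Y \<inter> main_region X' Y' = {}"
  unfolding main_region_def using A_neq by auto

lemma main_side_region_disjoint: "X \<noteq> C \<Longrightarrow> Y \<noteq> B' \<Longrightarrow> main_region X Y \<inter> side_region = {}"
  unfolding main_region_def side_region_def using A_neq by auto

lemma main_detour_region_disjoint: "X \<noteq> C \<Longrightarrow> Y \<noteq> B' \<Longrightarrow> main_region X Y \<inter> detour_region = {}"
  unfolding main_region_def detour_region_def using A_neq C_neq A_mid(2)
  by (auto dest: differ_one_imp_neq)

lemma side_detour_region_disjoint: "side_region \<inter> detour_region = {}"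
  unfolding side_region_def detour_region_def using B_neq C_neq A_mid
  by (auto dest: differ_one_imp_neq)

definition route :: "nat \<Rightarrow> e3vert list" where
  "route i = (if i < 2 * k then main_route (ternary_nbr C i) (ternary_nbr B' i)
              else if i = 2 * k then side_route else detour_route)"

lemma route_nbrs:
  assumes "i < 2 * k"
  shows "tstr t (ternary_nbr C i)" "differ_one C (ternary_nbr C i)"
    "tstr s (ternary_nbr B' i)" "differ_one (ternary_nbr B' i) B'"
  using assms k_le_s k_le_t tstr_ternary_nbr[OF C, of i] tstr_ternary_nbr[OF B', of i]
  by (auto simp: differ_one_commute)

lemma route_path: "e3c_path r s t u v (route i)" "path_len (route i) \<le> r + s + t + 6"
  using main_route_path[OF route_nbrs] side_route_path detour_route_path by (auto simp: route_def)

lemma route_Int_route: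
  assumes "i < j" "j < 2 * k + 2"
  shows "set (route i) \<inter> set (route j) \<subseteq> {u, v}"
proof -
  consider "j < 2 * k" | "i < 2 * k" "j = 2 * k \<or> j = 2 * k + 1" | "i = 2 * k" "j = 2 * k + 1"
    using assms by linarith
  then show ?thesis
  proof cases
    case 1
    then have "ternary_nbr C i \<noteq> ternary_nbr C j" "ternary_nbr B' i \<noteq> ternary_nbr B' j"
      using assms(1) k_le_s k_le_t inj_on_ternary_nbr[OF C] inj_on_ternary_nbr[OF B']
      by (auto dest: inj_onD)
    moreover have "set (route i) \<subseteq> {u, v} \<union> main_region (ternary_nbr C i) (ternary_nbr B' i)"
      "set (route j) \<subseteq> {u, v} \<union> main_region (ternary_nbr C j) (ternary_nbr B' j)"
      using 1 assms(1) set_main_route by (simp_all add: route_def)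
    ultimately show ?thesis
      using main_region_disjoint by blast
  next
    case 2
    then have "ternary_nbr C i \<noteq> C" "ternary_nbr B' i \<noteq> B'"
      using route_nbrs differ_one_imp_neq by metis+
    moreover have "set (route i) \<subseteq> {u, v} \<union> main_region (ternary_nbr C i) (ternary_nbr B' i)"
      "set (route j) \<subseteq> {u, v} \<union> side_region \<union> detour_region"
      using 2 set_main_route set_side_route set_detour_route by (auto simp: route_def)
    ultimately show ?thesis
      using main_side_region_disjoint main_detour_region_disjoint by blast
  next
    case 3
    then show ?thesis
      using set_side_route set_detour_route side_detour_region_disjoint by (auto simp: route_def)
  qed
qed

theorem disjoint_paths_route:
  "disjoint_paths r s t u v (2 * k + 2) (r + s + t + 6) (map route [0..<2 * k + 2])"
proof (rule disjoint_paths_upt)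
  show "u \<noteq> v" "\<not> e3c_adj r s t u v"
    using A_neq by (auto simp: e3c_adj_def)
  show "set (route i) \<inter> set (route j) \<subseteq> {u, v}" if "i < 2 * k + 2" "j < 2 * k + 2" "i \<noteq> j" for i j
    using that route_Int_route[of i j] route_Int_route[of j i]
    by (metis Int_commute linorder_neqE_nat)
qed (use route_path in auto)

end

theorem lemma21:
  fixes r s t :: nat and A B C A' B' C' :: "nat list" and d d' :: nat
  assumes "1 \<le> r" "r \<le> s" "s \<le> t"
    and "(A,B,C,d) \<in> e3c_verts r s t" "(A',B',C',d') \<in> e3c_verts r s t"
    and "A \<noteq> A'" "B \<noteq> B'" "C \<noteq> C'" "d \<noteq> d'"
  shows "\<exists>P :: e3vert list list. length P = 2 * r + 2 \<and> distinct P \<and>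
    (\<forall>p\<in>set P. e3c_path r s t (A,B,C,d) (A',B',C',d') p \<and> path_len p \<le> r + s + t + 6) \<and>
    (\<forall>i<length P. \<forall>j<length P. i \<noteq> j \<longrightarrow>
        set (P ! i) \<inter> set (P ! j) \<subseteq> {(A,B,C,d), (A',B',C',d')})"
proof -
  have strs: "tstr r A" "tstr s B" "tstr t C" "tstr r A'" "tstr s B'" "tstr t C'"
    and layers: "d < 3" "d' < 3" "d \<noteq> d'"
    using assms(4,5,9) by (auto simp: e3c_verts_def)
  interpret normal: layer01_pair
    "layer_len r s t (3 - d - d')" "layer_len r s t d'" "layer_len r s t d" r
    "layer_string (3 - d - d') A B C" "layer_string d' A B C" "layer_string d A B C"
    "layer_string (3 - d - d') A' B' C'" "layer_string d' A' B' C'" "layer_string d A' B' C'"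
    using strs assms(2,3,6-8)
    by unfold_locales (auto simp: tstr_layer_string layer_string_def layer_len_def)
  have u: "relabel d d' normal.u = (A, B, C, d)" and v: "relabel d d' normal.v = (A', B', C', d')"
    using relabel_layer_strings[OF layers] by (simp_all add: layer_perm_def)
  have "disjoint_paths r s t (A, B, C, d) (A', B', C', d') (2 * r + 2) (r + s + t + 6)
      (map (map (relabel d d')) (map normal.route [0..<2 * r + 2]))"
    using disjoint_paths_map[OF inj_on_relabel[OF layers] image_subsetI[OF relabel_verts[OF layers]]
        e3c_adj_relabel[OF layers] normal.disjoint_paths_route]
    unfolding u v layer_len_sum[OF layers] .
  then show ?thesis
    unfolding disjoint_paths_def by blast
qed

end
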